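(* Every right Rees artinian, left cancellative monoid is a group or a 0-group.
   Context: A monoid $S$ is right Rees artinian if its right ideals satisfy the descending chain condition. $S$ is left cancellative if $ab=ac$ implies $b=c$. A 0-group is a group with an externally adjoined zero. *)

theory Defs
  imports "HOL-Algebra.Group"
begin

definition right_ideal :: "('a, 'b) monoid_scheme \<Rightarrow> 'a set \<Rightarrow> bool" where
  "right_ideal S I \<longleftrightarrow> I \<subseteq> carrier S \<and> I \<noteq> {} \<and>
     (\<forall>a\<in>I. \<forall>s\<in>carrier S. a \<otimes>\<^bsub>S\<^esub> s \<in> I)"

definition right_rees_artinian :: "('a, 'b) monoid_scheme \<Rightarrow> bool" where
  "right_rees_artinian S \<longleftrightarrow>
     (\<forall>f :: nat \<Rightarrow> 'a set. (\<forall>n. right_ideal S (f n)) \<and> (\<forall>n. f (Suc n) \<subseteq> f n)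
        \<longrightarrow> (\<exists>N. \<forall>n\<ge>N. f n = f N))"

definition left_cancellative :: "('a, 'b) monoid_scheme \<Rightarrow> bool" where
  "left_cancellative S \<longleftrightarrow>
     (\<forall>a\<in>carrier S. \<forall>b\<in>carrier S. \<forall>c\<in>carrier S.
        a \<otimes>\<^bsub>S\<^esub> b = a \<otimes>\<^bsub>S\<^esub> c \<longrightarrow> b = c)"

text \<open>A 0-group: a monoid with a zero z different from the identity such that
  every nonzero element is a unit (so the nonzero elements form a group, and z is
  an externally adjoined zero).\<close>
definition zero_group :: "('a, 'b) monoid_scheme \<Rightarrow> bool" where
  "zero_group S \<longleftrightarrow> monoid S \<and>
     (\<exists>z\<in>carrier S. (\<forall>x\<in>carrier S. z \<otimes>\<^bsub>S\<^esub> x = z \<and> x \<otimes>\<^bsub>S\<^esub> z = z)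
        \<and> z \<noteq> \<one>\<^bsub>S\<^esub> \<and> (\<forall>x\<in>carrier S - {z}. x \<in> Units S))"

end

theory Submission
  imports Defs
begin

text \<open>For every element a, the principal right ideals a^n S form a descending chain. Once it
  stabilises at a^N S, we get a^N = a^N a s for some s, and cancelling a^N on the left
  gives a s = 1. A monoid in which every element has a right inverse is a group.\<close>

lemma (in monoid) right_ideal_principal:
  assumes "a \<in> carrier G"
  shows "right_ideal G ((\<lambda>s. a \<otimes> s) ` carrier G)"
  using assms unfolding right_ideal_def by (auto simp: m_assoc intro!: image_eqI)

lemma (in monoid) principal_right_ideal_pow_Suc_subset:
  assumes "a \<in> carrier G"
  shows "(\<lambda>s. a [^] Suc n \<otimes> s) ` carrier G \<subseteq> (\<lambda>s. a [^] n \<otimes> s) ` carrier G"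
  using assms by (auto simp: m_assoc)

lemma (in monoid) left_cancellative_pow:
  assumes lc: "left_cancellative G"
    and a: "a \<in> carrier G" and b: "b \<in> carrier G" and c: "c \<in> carrier G"
    and eq: "a [^] (n::nat) \<otimes> b = a [^] n \<otimes> c"
  shows "b = c"
  using b c eq
proof (induction n arbitrary: b c)
  case 0
  then show ?case by simp
next
  case (Suc n)
  then have "a [^] n \<otimes> (a \<otimes> b) = a [^] n \<otimes> (a \<otimes> c)"
    using a by (simp add: m_assoc)
  then have "a \<otimes> b = a \<otimes> c" using Suc a by simp
  then show ?case using lc a Suc.prems unfolding left_cancellative_def by blast
qed

lemma (in monoid) right_rees_artinian_right_inverse:
  assumes ra: "right_rees_artinian G" and lc: "left_cancellative G"
    and a: "a \<in> carrier G"
  shows "\<exists>s\<in>carrier G. a \<otimes> s = \<one>"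
proof -
  define I where "I n = (\<lambda>s. a [^] n \<otimes> s) ` carrier G" for n :: nat
  have "right_ideal G (I n)" for n
    unfolding I_def using a by (simp add: right_ideal_principal)
  moreover have "I (Suc n) \<subseteq> I n" for n
    unfolding I_def using a by (rule principal_right_ideal_pow_Suc_subset)
  ultimately obtain N where N: "\<forall>n\<ge>N. I n = I N"
    using ra unfolding right_rees_artinian_def by blast
  have "a [^] N \<in> I N"
    unfolding I_def using a by (auto intro: image_eqI[where x = \<one>])
  then have "a [^] N \<in> I (Suc N)"
    using N[rule_format, of "Suc N"] by simp
  then obtain s where s: "s \<in> carrier G" "a [^] N = a [^] Suc N \<otimes> s"
    unfolding I_def by auto
  then have "a [^] N \<otimes> \<one> = a [^] N \<otimes> (a \<otimes> s)"
    using a by (simp add: m_assoc)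
  then have "\<one> = a \<otimes> s"
    using left_cancellative_pow[OF lc a] a s(1) by simp
  then show ?thesis using s(1) by auto
qed

lemma (in monoid) group_r_invI:
  assumes inv: "\<And>x. x \<in> carrier G \<Longrightarrow> \<exists>s\<in>carrier G. x \<otimes> s = \<one>"
  shows "group G"
proof (rule group_l_invI)
  fix x assume x: "x \<in> carrier G"
  obtain s where s: "s \<in> carrier G" "x \<otimes> s = \<one>" using inv x by blast
  obtain t where t: "t \<in> carrier G" "s \<otimes> t = \<one>" using inv s(1) by blast
  have "x = x \<otimes> (s \<otimes> t)" using x t by simp
  also have "\<dots> = (x \<otimes> s) \<otimes> t" using x s(1) t(1) by (simp only: m_assoc)
  also have "\<dots> = t" using s t by simp
  finally show "\<exists>y\<in>carrier G. y \<otimes> x = \<one>" using s t by auto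
qed

theorem mainTheorem18:
  fixes S :: "('a, 'b) monoid_scheme"
  assumes "monoid S"
    and "right_rees_artinian S"
    and "left_cancellative S"
  shows "group S \<or> zero_group S"
proof -
  interpret monoid S by fact
  \<comment> \<open>A 0-group is never left cancellative (z 1 = z z with 1 \<noteq> z), so only the group case occurs.\<close>
  have "group S"
    using group_r_invI right_rees_artinian_right_inverse assms(2,3) by blast
  then show ?thesis ..
qed

end
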